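(* Let $n\ge1$ and let $V^i=V^i(u)$, $i=1,\dots,n$, be smooth functions. Consider the conservative hydrodynamic type system $u^i_t=(V^i(u))_x$ written in potential coordinates $b^i$ with $b^i_x=u^i$ as $F^i=b^i_t-V^i(b_x)=0$. Let $C$ be a second-order homogeneous Hamiltonian operator in canonical form $C^{ij}=\partial_x g^{ij}\partial_x$, where $(g^{ij})$ is the inverse of the nondegenerate matrix $g_{ij}=T_{ijk}u^k+g_{0ij}$ with $T_{ijk}$, $g_{0ij}$ constants skew-symmetric with respect to any pair of indices; in potential coordinates $C$ becomes the operator of order zero $C^{ij}=-g^{ij}(b_x)$, i.e. $C(\mathbf p)^i=-g^{ij}p_j$. Then the compatibility condition $\ell_F(C(\mathbf p))=0$ on the cotangent covering holds if and only if, for all indices, $$g_{qj}V^j_{,p}+g_{pj}V^j_{,q}=0,\qquad g_{qk}V^k_{,pl}+g_{pq,k}V^k_{,l}+g_{qk,l}V^k_{,p}=0 .$$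
   Context: Summation over repeated indices is understood; an index after a comma denotes partial derivative with respect to $u^k=b^k_x$, e.g. $V^j_{,p}=\partial V^j/\partial u^p$, $V^k_{,pl}=\partial^2V^k/\partial u^p\partial u^l$, $g_{pq,k}=\partial g_{pq}/\partial u^k$. The linearization of $F$ is $\ell_F(\varphi)^i=D_t\varphi^i-V^i_{,j}D_x\varphi^j$ ($D_t,D_x$ total derivatives). The cotangent covering is the system in $b^i$ and new odd variables $p_i$: $b^i_t=V^i(b_x)$, $p_{i,t}=V^j_{,i}p_{j,x}+V^j_{,il}b^l_{xx}p_j$. The condition $\ell_F(C(\mathbf p))=0$ on the cotangent covering means the expression vanishes identically in the jet variables after eliminating $b_t,p_t$ and their derivatives via the covering equations. *)

theory Defs
  imports "HOL-Analysis.Analysis"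
begin

text \<open>Vectors in R^n are modelled as real^'n for a finite index type 'n.
  Jet coordinates on the cotangent covering (in potential coordinates):
  u = b_x, w = b_xx, p = (p_i), q = p_x = (p_{i,x}).\<close>

definition pd :: "(real^'n \<Rightarrow> real) \<Rightarrow> 'n \<Rightarrow> real^'n \<Rightarrow> real" where
  "pd f k u = deriv (\<lambda>t. f (u + t *\<^sub>R axis k 1)) 0"

fun iter_pd :: "'n list \<Rightarrow> (real^'n \<Rightarrow> real) \<Rightarrow> real^'n \<Rightarrow> real" where
  "iter_pd [] f = f"
| "iter_pd (k # ks) f = pd (iter_pd ks f) k"

definition smooth_on :: "(real^'n) set \<Rightarrow> (real^'n \<Rightarrow> real) \<Rightarrow> bool" where
  "smooth_on U f \<longleftrightarrow> open U \<and> (\<forall>ks. iter_pd ks f differentiable_on U)"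

definition gmat :: "('n \<Rightarrow> 'n \<Rightarrow> 'n \<Rightarrow> real) \<Rightarrow> ('n \<Rightarrow> 'n \<Rightarrow> real) \<Rightarrow> real^'n \<Rightarrow> real^'n^'n" where
  "gmat T g0 u = (\<chi> i j. (\<Sum>k\<in>UNIV. T i j k * u $ k) + g0 i j)"

definition ginv :: "('n \<Rightarrow> 'n \<Rightarrow> 'n \<Rightarrow> real) \<Rightarrow> ('n \<Rightarrow> 'n \<Rightarrow> real) \<Rightarrow> real^'n \<Rightarrow> real^'n^'n" where
  "ginv T g0 u = matrix_inv (gmat T g0 u)"

definition totally_skew3 :: "('n \<Rightarrow> 'n \<Rightarrow> 'n \<Rightarrow> real) \<Rightarrow> bool" where
  "totally_skew3 T \<longleftrightarrow> (\<forall>i j k. T i j k = - T j i k \<and> T i j k = - T i k j \<and> T i j k = - T k j i)"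

definition skew2 :: "('n \<Rightarrow> 'n \<Rightarrow> real) \<Rightarrow> bool" where
  "skew2 A \<longleftrightarrow> (\<forall>i j. A i j = - A j i)"

definition Cop :: "('n \<Rightarrow> 'n \<Rightarrow> 'n \<Rightarrow> real) \<Rightarrow> ('n \<Rightarrow> 'n \<Rightarrow> real) \<Rightarrow> real^'n \<Rightarrow> real^'n \<Rightarrow> real^'n" where
  "Cop T g0 u p = (\<chi> i. - (\<Sum>j\<in>UNIV. ginv T g0 u $ i $ j * p $ j))"

text \<open>Total x-derivative of a function phi(u,p) (u = b_x, p): D_x u = w = b_xx, D_x p = q = p_x.\<close>
definition Dx :: "(real^'n \<Rightarrow> real^'n \<Rightarrow> real^'n) \<Rightarrow> 'n \<Rightarrow> real^'n \<Rightarrow> real^'n \<Rightarrow> real^'n \<Rightarrow> real^'n \<Rightarrow> real" where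
  "Dx \<phi> i u w p q =
     (\<Sum>k\<in>UNIV. pd (\<lambda>v. \<phi> v p $ i) k u * w $ k) + (\<Sum>j\<in>UNIV. pd (\<lambda>r. \<phi> u r $ i) j p * q $ j)"

text \<open>Total t-derivative of phi(u,p) on the cotangent covering, after eliminating the
  t-derivatives via b^k_t = V^k(b_x) (so b^k_{xt} = V^k_{,l} b^l_{xx}) and
  p_{j,t} = V^m_{,j} p_{m,x} + V^m_{,jl} b^l_{xx} p_m.\<close>
definition Dt :: "(real^'n \<Rightarrow> real^'n) \<Rightarrow> (real^'n \<Rightarrow> real^'n \<Rightarrow> real^'n) \<Rightarrow> 'n
                 \<Rightarrow> real^'n \<Rightarrow> real^'n \<Rightarrow> real^'n \<Rightarrow> real^'n \<Rightarrow> real" where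
  "Dt V \<phi> i u w p q =
     (\<Sum>k\<in>UNIV. pd (\<lambda>v. \<phi> v p $ i) k u * (\<Sum>l\<in>UNIV. pd (\<lambda>v. V v $ k) l u * w $ l))
   + (\<Sum>j\<in>UNIV. pd (\<lambda>r. \<phi> u r $ i) j p *
        ((\<Sum>m\<in>UNIV. pd (\<lambda>v. V v $ m) j u * q $ m)
         + (\<Sum>m\<in>UNIV. \<Sum>l\<in>UNIV. pd (pd (\<lambda>v. V v $ m) l) j u * w $ l * p $ m)))"

text \<open>Linearization of F^i = b^i_t - V^i(b_x) applied to phi, on the cotangent covering:
  ell_F(phi)^i = D_t phi^i - V^i_{,j} D_x phi^j.\<close>
definition ellF :: "(real^'n \<Rightarrow> real^'n) \<Rightarrow> (real^'n \<Rightarrow> real^'n \<Rightarrow> real^'n) \<Rightarrow> 'n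
                 \<Rightarrow> real^'n \<Rightarrow> real^'n \<Rightarrow> real^'n \<Rightarrow> real^'n \<Rightarrow> real" where
  "ellF V \<phi> i u w p q =
     Dt V \<phi> i u w p q - (\<Sum>j\<in>UNIV. pd (\<lambda>v. V v $ i) j u * Dx \<phi> j u w p q)"

end

(*
  On the cotangent covering with jet coordinates u = b_x, w = b_xx, p and q = p_x, the
  operator is C(p) = - G p with G = g^{-1}.  Differentiating the inverse,
  d(g^{-1}) = - g^{-1} (dg) g^{-1}, and using the total skew-symmetry of T, the u-Jacobian of
  C(p) is - J with J = G T(G p), where T(v)_{ij} = T_{ijk} v^k.  Hence

    l_F(C(p)) = (A J - J A - G H_p) w + (A G - G A^T) q,

  with A = (V^i_{,j}) and H_p the Hessian of p_m V^m.  This vanishes identically iff both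
  coefficient matrices vanish.  Conjugating by the invertible matrix g turns A G = G A^T into
  g A + (g A)^T = 0, the first condition (g is skew).  Given it, g A G = A^T, and after the
  substitution p = g x the coefficient g (A J - J A - G H_p) is linear in x; its
  x-coefficients are the second condition, once the mixed partials of V are known to commute.
*)
theory Submission
  imports Defs
begin

section \<open>Differentiating the inverse of a matrix\<close>

lemma matrix_inv_right:
  fixes A :: "'a::semiring_1^'n^'m"
  assumes "invertible A"
  shows "A ** matrix_inv A = mat 1"
  using someI_ex[OF assms[unfolded invertible_def]] unfolding matrix_inv_def by blast

lemma matrix_inv_left:
  fixes A :: "'a::semiring_1^'n^'m"
  assumes "invertible A"
  shows "matrix_inv A ** A = mat 1"
  using someI_ex[OF assms[unfolded invertible_def]] unfolding matrix_inv_def by blast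

lemma matrix_diff_ldistrib: "(A :: 'a::ring_1^'n^'m) ** (B - C) = A ** B - A ** C"
  by (vector matrix_matrix_mult_def sum_subtractf[symmetric] algebra_simps)

lemma matrix_diff_rdistrib: "((A :: 'a::ring_1^'n^'m) - B) ** C = A ** C - B ** C"
  by (vector matrix_matrix_mult_def sum_subtractf[symmetric] algebra_simps)

lemma matrix_inv_diff:
  fixes M N :: "'a::ring_1^'n^'n"
  assumes "invertible M" "invertible N"
  shows "matrix_inv M - matrix_inv N = matrix_inv M ** (N - M) ** matrix_inv N"
  by (simp add: matrix_diff_ldistrib matrix_diff_rdistrib matrix_mul_assoc[symmetric]
      matrix_inv_right[OF assms(2)] matrix_inv_left[OF assms(1)])

lemma matrix_inv_cramer:
  fixes A :: "real^'n^'n"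
  assumes "det A \<noteq> 0"
  shows "matrix_inv A $ k $ j = det (\<chi> i l. if l = k then axis j 1 $ i else A $ i $ l) / det A"
proof -
  have "invertible A" using assms invertible_det_nz by blast
  then have "A *v (matrix_inv A *v axis j 1) = axis j 1"
    by (simp add: matrix_vector_mul_assoc matrix_inv_right)
  then have "matrix_inv A *v axis j 1
      = (\<chi> k. det (\<chi> i l. if l = k then axis j 1 $ i else A $ i $ l) / det A)"
    using cramer[OF assms] by blast
  moreover have "(matrix_inv A *v axis j 1) $ k = matrix_inv A $ k $ j"
    by (simp add: matrix_vector_mult_def axis_def if_distrib cong: if_cong)
  ultimately show ?thesis by simp
qed

lemma continuous_det:
  fixes M :: "real \<Rightarrow> real^'n^'n"
  assumes "\<And>i j. continuous F (\<lambda>t. M t $ i $ j)"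
  shows "continuous F (\<lambda>t. det (M t))"
  unfolding det_def by (intro continuous_intros assms)

lemma eventually_invertible:
  fixes M :: "real \<Rightarrow> real^'n^'n"
  assumes "\<And>i j. continuous (at t0) (\<lambda>t. M t $ i $ j)" "invertible (M t0)"
  shows "eventually (\<lambda>t. invertible (M t)) (at t0)"
proof -
  have "((\<lambda>t. det (M t)) \<longlongrightarrow> det (M t0)) (at t0)"
    using continuous_det[of "at t0" M] assms(1) by (simp add: continuous_at)
  moreover have "det (M t0) \<noteq> 0" using assms(2) invertible_det_nz by blast
  ultimately show ?thesis
    by (auto elim!: eventually_mono dest!: tendsto_imp_eventually_ne simp: invertible_det_nz)
qed

lemma tendsto_matrix_inv:
  fixes M :: "real \<Rightarrow> real^'n^'n"
  assumes cont: "\<And>i j. continuous (at t0) (\<lambda>t. M t $ i $ j)" and inv: "invertible (M t0)"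
  shows "((\<lambda>t. matrix_inv (M t) $ a $ b) \<longlongrightarrow> matrix_inv (M t0) $ a $ b) (at t0)"
proof -
  let ?N = "\<lambda>t. \<chi> i l. if l = a then axis b 1 $ i else M t $ i $ l"
  have "continuous (at t0) (\<lambda>t. ?N t $ i $ l)" for i l
    using cont by (cases "l = a") simp_all
  then have "continuous (at t0) (\<lambda>t. det (?N t))"
    by (rule continuous_det)
  moreover have "continuous (at t0) (\<lambda>t. det (M t))"
    by (rule continuous_det[OF cont])
  moreover have "det (M t0) \<noteq> 0" using inv invertible_det_nz by blast
  ultimately have "((\<lambda>t. det (?N t) / det (M t)) \<longlongrightarrow> det (?N t0) / det (M t0)) (at t0)"
    unfolding continuous_at by (intro tendsto_intros)
  moreover have "eventually (\<lambda>t. det (?N t) / det (M t) = matrix_inv (M t) $ a $ b) (at t0)"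
    using eventually_invertible[OF cont inv]
    by eventually_elim (simp add: matrix_inv_cramer invertible_det_nz)
  ultimately show ?thesis
    using \<open>det (M t0) \<noteq> 0\<close> by (simp add: matrix_inv_cramer Lim_transform_eventually)
qed

lemma has_real_derivative_matrix_inv_line:
  fixes A B :: "real^'n^'n"
  assumes inv: "invertible A"
  shows "((\<lambda>t. matrix_inv (A + t *\<^sub>R B) $ i $ j) has_real_derivative
           - (matrix_inv A ** B ** matrix_inv A) $ i $ j) (at 0)"
proof -
  let ?N = "\<lambda>t. matrix_inv (A + t *\<^sub>R B)"
  have cont: "continuous (at 0) (\<lambda>t. (A + t *\<^sub>R B) $ i $ j)" for i j
    by (intro continuous_intros)
  have "((\<lambda>t. - (?N 0 ** B ** ?N t) $ i $ j) \<longlongrightarrow> - (?N 0 ** B ** ?N 0) $ i $ j) (at 0)"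
    unfolding matrix_matrix_mult_def
    by (simp, intro tendsto_intros tendsto_matrix_inv[OF cont, simplified] inv)
  moreover have
    "eventually (\<lambda>t. - (?N 0 ** B ** ?N t) $ i $ j = (?N t $ i $ j - ?N 0 $ i $ j) / (t - 0)) (at 0)"
    using eventually_invertible[OF cont, simplified, OF inv] eventually_neq_at_within[of 0 0 UNIV]
  proof eventually_elim
    case (elim t)
    then have "?N 0 - ?N t = t *\<^sub>R (?N 0 ** B ** ?N t)"
      using matrix_inv_diff[of A "A + t *\<^sub>R B"] inv
      by (simp add: matrix_scalar_ac scalar_matrix_assoc)
    then have "?N 0 $ i $ j - ?N t $ i $ j = t * (?N 0 ** B ** ?N t) $ i $ j"
      by (simp add: vec_eq_iff)
    then show ?case using elim by (simp add: field_simps)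
  qed
  ultimately show ?thesis
    unfolding has_field_derivative_iff by (simp add: Lim_transform_eventually)
qed

section \<open>Partial derivatives\<close>

lemma pd_eqI:
  assumes "((\<lambda>t. f (u + t *\<^sub>R axis k 1)) has_real_derivative D) (at 0)"
  shows "pd f k u = D"
  using assms unfolding pd_def by (rule DERIV_imp_deriv)

lemma has_real_derivative_pd:
  fixes f :: "real^'n \<Rightarrow> real"
  assumes "f differentiable (at (x + t0 *\<^sub>R axis k 1))"
  shows "((\<lambda>t. f (x + t *\<^sub>R axis k 1))
           has_real_derivative pd f k (x + t0 *\<^sub>R axis k 1)) (at t0)"
proof -
  let ?e = "axis k 1 :: real^'n"
  obtain f' where f': "(f has_derivative f') (at (x + t0 *\<^sub>R ?e))"
    using assms unfolding differentiable_def by blast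
  have scale: "f' (h *\<^sub>R ?e) = h * f' ?e" for h
    using f' by (simp add: has_derivative_bounded_linear linear_simps)
  have line: "((\<lambda>t. f (y + t *\<^sub>R ?e)) has_real_derivative f' ?e) (at t1)"
    if "y + t1 *\<^sub>R ?e = x + t0 *\<^sub>R ?e" for y t1
  proof -
    have "((\<lambda>t. y + t *\<^sub>R ?e) has_derivative (\<lambda>h. h *\<^sub>R ?e)) (at t1)"
      by (auto intro!: derivative_eq_intros)
    from has_derivative_compose[OF this, of f f'] show ?thesis
      using f' that by (intro has_derivative_imp_has_field_derivative) (simp_all add: scale)
  qed
  have "pd f k (x + t0 *\<^sub>R ?e) = f' ?e"
    by (rule pd_eqI, rule line) simp
  with line[of x t0] show ?thesis by simp
qed

lemma mixed_difference_mvt: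
  fixes f :: "real^'n \<Rightarrow> real" and u :: "real^'n" and l j :: 'n and h :: real
  defines "P \<equiv> \<lambda>s t. u + s *\<^sub>R axis l 1 + t *\<^sub>R axis j 1"
  assumes h: "h > 0"
    and box: "\<And>s t. s \<in> {0..h} \<Longrightarrow> t \<in> {0..h} \<Longrightarrow> P s t \<in> U"
    and df: "\<And>x. x \<in> U \<Longrightarrow> f differentiable (at x)"
    and dpdf: "\<And>x. x \<in> U \<Longrightarrow> pd f j differentiable (at x)"
  shows "\<exists>s t. s \<in> {0<..<h} \<and> t \<in> {0<..<h} \<and>
           f (P h h) - f (P 0 h) - f (P h 0) + f (P 0 0) = h * h * pd (pd f j) l (P s t)"
proof -
  have P_swap: "P s t = (u + t *\<^sub>R axis j 1) + s *\<^sub>R axis l 1" for s t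
    unfolding P_def by (simp add: algebra_simps)
  have "\<exists>t>0. t < h \<and> (f (P h h) - f (P 0 h)) - (f (P h 0) - f (P 0 0))
          = (h - 0) * (pd f j (P h t) - pd f j (P 0 t))"
  proof (rule MVT2[OF h])
    fix t assume "0 \<le> t" "t \<le> h"
    then show "((\<lambda>t. f (P h t) - f (P 0 t))
        has_real_derivative pd f j (P h t) - pd f j (P 0 t)) (at t)"
      using box[of h t] box[of 0 t] df unfolding P_def
      by (intro derivative_intros has_real_derivative_pd) auto
  qed
  then obtain t where t: "t \<in> {0<..<h}"
    and diff_t: "(f (P h h) - f (P 0 h)) - (f (P h 0) - f (P 0 0)) = h * (pd f j (P h t) - pd f j (P 0 t))"
    by auto
  have "\<exists>s>0. s < h \<and> pd f j (P h t) - pd f j (P 0 t) = (h - 0) * pd (pd f j) l (P s t)"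
  proof (rule MVT2[OF h])
    fix s assume "0 \<le> s" "s \<le> h"
    then show "((\<lambda>s. pd f j (P s t)) has_real_derivative pd (pd f j) l (P s t)) (at s)"
      using t box[of s t] dpdf unfolding P_swap
      by (intro has_real_derivative_pd) auto
  qed
  then obtain s where "s \<in> {0<..<h}" "pd f j (P h t) - pd f j (P 0 t) = h * pd (pd f j) l (P s t)"
    by auto
  with t diff_t show ?thesis by (intro exI[of _ s] exI[of _ t]) (simp add: algebra_simps)
qed

(* Schwarz's theorem: both mixed partials are limits of the same mixed second difference over
   squares of side h, divided by h^2. *)
lemma pd_commute:
  fixes f :: "real^'n \<Rightarrow> real"
  assumes U: "open U" "u \<in> U"
    and df: "\<And>x. x \<in> U \<Longrightarrow> f differentiable (at x)"
    and dpdf: "\<And>k x. x \<in> U \<Longrightarrow> pd f k differentiable (at x)"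
    and cont: "isCont (pd (pd f j) l) u" "isCont (pd (pd f l) j) u"
  shows "pd (pd f j) l u = pd (pd f l) j u"
proof -
  let ?a = "pd (pd f j) l u" and ?b = "pd (pd f l) j u"
  let ?P = "\<lambda>s t. u + s *\<^sub>R axis l 1 + t *\<^sub>R axis j 1"
  and ?Q = "\<lambda>s t. u + s *\<^sub>R axis j 1 + t *\<^sub>R axis l 1"
  have "dist ?a ?b \<le> 0 + e" if e: "e > 0" for e
  proof -
    let ?near = "\<lambda>x. x \<in> U \<and> dist (pd (pd f j) l x) ?a < e / 2 \<and> dist (pd (pd f l) j x) ?b < e / 2"
    have "eventually ?near (nhds u)"
      using eventually_nhds_in_open[OF U] cont[unfolded isCont_def tendsto_at_iff_tendsto_nhds] e
      by (intro eventually_conj tendstoD) simp_all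
    then obtain d where d: "d > 0"
      and near: "\<And>x. dist x u < d \<Longrightarrow> ?near x"
      unfolding eventually_nhds_metric by blast
    define h where "h = d / 3"
    have h: "h > 0" using d by (simp add: h_def)
    have close: "dist (u + s *\<^sub>R axis m 1 + t *\<^sub>R axis k 1) u < d"
      if "s \<in> {0..h}" "t \<in> {0..h}" for s t and m k :: 'n
    proof -
      have "dist (u + s *\<^sub>R axis m 1 + t *\<^sub>R axis k 1) u
          = norm (s *\<^sub>R axis m 1 + t *\<^sub>R axis k 1 :: real^'n)"
        by (simp add: dist_norm)
      also have "\<dots> \<le> norm (s *\<^sub>R axis m 1 :: real^'n) + norm (t *\<^sub>R axis k 1 :: real^'n)"
        by (rule norm_triangle_ineq)
      also have "\<dots> = \<bar>s\<bar> + \<bar>t\<bar>"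
        by simp
      finally show ?thesis
        using that d by (simp add: h_def)
    qed
    obtain s t where st: "s \<in> {0<..<h}" "t \<in> {0<..<h}"
      and diff_jl: "f (?P h h) - f (?P 0 h) - f (?P h 0) + f (?P 0 0) = h * h * pd (pd f j) l (?P s t)"
      using mixed_difference_mvt[OF h, of u l j U f] near close df dpdf by blast
    obtain s' t' where st': "s' \<in> {0<..<h}" "t' \<in> {0<..<h}"
      and diff_lj: "f (?Q h h) - f (?Q 0 h) - f (?Q h 0) + f (?Q 0 0) = h * h * pd (pd f l) j (?Q s' t')"
      using mixed_difference_mvt[OF h, of u j l U f] near close df dpdf by blast
    have "f (?P h h) - f (?P 0 h) - f (?P h 0) + f (?P 0 0)
        = f (?Q h h) - f (?Q 0 h) - f (?Q h 0) + f (?Q 0 0)"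
      by (simp add: algebra_simps)
    with diff_jl diff_lj h have same: "pd (pd f j) l (?P s t) = pd (pd f l) j (?Q s' t')"
      by simp
    have near_a: "dist (pd (pd f j) l (?P s t)) ?a < e / 2"
      using near close st by auto
    have near_b: "dist (pd (pd f j) l (?P s t)) ?b < e / 2"
      unfolding same using near close st' by auto
    have "dist ?a ?b < e"
      by (rule dist_triangle_half_r[OF near_a near_b])
    then show ?thesis by simp
  qed
  then have "dist ?a ?b \<le> 0"
    by (rule field_le_epsilon)
  then show ?thesis by simp
qed

lemma smooth_on_differentiable:
  assumes "smooth_on U f" "x \<in> U"
  shows "iter_pd ks f differentiable (at x)"
  using assms differentiable_on_eq_differentiable_at unfolding smooth_on_def by blast

lemma smooth_on_pd_commute:
  assumes f: "smooth_on U f" and u: "u \<in> U"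
  shows "pd (pd f j) l u = pd (pd f l) j u"
proof (rule pd_commute)
  show "open U" using f unfolding smooth_on_def by blast
  show "f differentiable (at x)" "pd f k differentiable (at x)" if "x \<in> U" for x k
    using smooth_on_differentiable[OF f that, of "[]"] smooth_on_differentiable[OF f that, of "[k]"]
    by simp_all
  show "isCont (pd (pd f j) l) u" "isCont (pd (pd f l) j) u"
    using smooth_on_differentiable[OF f u, of "[l, j]"] smooth_on_differentiable[OF f u, of "[j, l]"]
    by (simp_all add: differentiable_imp_continuous_within)
qed (rule u)

section \<open>The metric and the operator C\<close>

definition dgmat :: "('n \<Rightarrow> 'n \<Rightarrow> 'n \<Rightarrow> real) \<Rightarrow> real^'n \<Rightarrow> real^'n^'n" where
  "dgmat T v = (\<chi> i j. \<Sum>k\<in>UNIV. T i j k * v $ k)"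

lemma gmat_line: "gmat T g0 (u + t *\<^sub>R v) = gmat T g0 u + t *\<^sub>R dgmat T v"
  by (simp add: gmat_def dgmat_def vec_eq_iff algebra_simps sum.distrib sum_distrib_left)

lemma dgmat_axis: "dgmat T (axis k 1) $ i $ j = T i j k"
  by (simp add: dgmat_def axis_def if_distrib cong: if_cong)

lemma dgmat_axis_mult:
  assumes "totally_skew3 T"
  shows "dgmat T (axis k 1) *v y = - (dgmat T y *v axis k 1)"
proof -
  have T23: "T i j k = - T i k j" for i j k
    using assms unfolding totally_skew3_def by blast
  have "(dgmat T (axis k 1) *v y) $ i = - (dgmat T y *v axis k 1) $ i" for i
  proof -
    have "(dgmat T (axis k 1) *v y) $ i = (\<Sum>j\<in>UNIV. T i j k * y $ j)"
      by (simp add: matrix_vector_mult_def dgmat_axis)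
    also have "\<dots> = - (\<Sum>j\<in>UNIV. T i k j * y $ j)"
      by (simp add: T23[of i _ k] sum_negf)
    also have "\<dots> = - (dgmat T y *v axis k 1) $ i"
      by (simp add: matrix_vector_mult_basis column_def dgmat_def)
    finally show ?thesis .
  qed
  then show ?thesis
    by (simp add: vec_eq_iff)
qed

lemma pd_gmat: "pd (\<lambda>v. gmat T g0 v $ i $ j) k u = T i j k"
  by (rule pd_eqI, simp add: gmat_line dgmat_axis) (auto intro!: derivative_eq_intros)

lemma Cop_eq: "Cop T g0 u p = - (ginv T g0 u *v p)"
  by (simp add: Cop_def matrix_vector_mult_def vec_eq_iff)

lemma pd_Cop_covector: "pd (\<lambda>r. Cop T g0 u r $ i) j p = - ginv T g0 u $ i $ j"
proof (rule pd_eqI)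
  have "Cop T g0 u (p + t *\<^sub>R axis j 1) $ i = Cop T g0 u p $ i - t * ginv T g0 u $ i $ j" for t
    by (simp add: Cop_eq matrix_vector_right_distrib matrix_vector_mult_scaleR
        matrix_vector_mult_basis column_def)
  then show "((\<lambda>t. Cop T g0 u (p + t *\<^sub>R axis j 1) $ i)
      has_real_derivative - ginv T g0 u $ i $ j) (at 0)"
    by (auto intro!: derivative_eq_intros)
qed

lemma pd_Cop:
  assumes "invertible (gmat T g0 u)" "totally_skew3 T"
  shows "pd (\<lambda>v. Cop T g0 v p $ i) k u = - (ginv T g0 u ** dgmat T (ginv T g0 u *v p)) $ i $ k"
proof (rule pd_eqI)
  let ?G = "ginv T g0 u"
  have "((\<lambda>t. Cop T g0 (u + t *\<^sub>R axis k 1) p $ i) has_real_derivative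
        (?G ** dgmat T (axis k 1) ** ?G *v p) $ i) (at 0)"
    unfolding Cop_eq ginv_def gmat_line
    by (auto simp: matrix_vector_mult_def sum_negf
        intro!: derivative_eq_intros has_real_derivative_matrix_inv_line assms(1))
  moreover have "?G ** dgmat T (axis k 1) ** ?G *v p = - (?G ** dgmat T (?G *v p) *v axis k 1)"
  proof -
    have "?G *v (- x) = - (?G *v x)" for x
      by (simp add: vec_eq_iff matrix_vector_mult_def sum_negf)
    then show ?thesis
      by (simp add: matrix_vector_mul_assoc[symmetric] dgmat_axis_mult[OF assms(2)])
  qed
  ultimately show "((\<lambda>t. Cop T g0 (u + t *\<^sub>R axis k 1) p $ i) has_real_derivative
        - (?G ** dgmat T (?G *v p)) $ i $ k) (at 0)"
    by (simp add: matrix_vector_mult_basis column_def)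
qed

lemma gmat_skew:
  assumes "totally_skew3 T" "skew2 g0"
  shows "gmat T g0 u $ a $ b = - gmat T g0 u $ b $ a"
proof -
  have "T a b k = - T b a k" "g0 a b = - g0 b a" for k
    using assms unfolding totally_skew3_def skew2_def by blast+
  then show ?thesis
    by (simp add: gmat_def sum_negf)
qed

definition jac :: "(real^'n \<Rightarrow> real^'n) \<Rightarrow> real^'n \<Rightarrow> real^'n^'n" where
  "jac V u = (\<chi> m j. pd (\<lambda>v. V v $ m) j u)"

definition hess_inner :: "(real^'n \<Rightarrow> real^'n) \<Rightarrow> real^'n \<Rightarrow> real^'n \<Rightarrow> real^'n^'n" where
  "hess_inner V u p = (\<chi> j l. \<Sum>m\<in>UNIV. p $ m * pd (pd (\<lambda>v. V v $ m) l) j u)"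

lemma ellF_Cop:
  fixes V :: "real^'n \<Rightarrow> real^'n" and T :: "'n \<Rightarrow> 'n \<Rightarrow> 'n \<Rightarrow> real"
    and g0 :: "'n \<Rightarrow> 'n \<Rightarrow> real" and u p :: "real^'n"
  assumes "invertible (gmat T g0 u)" "totally_skew3 T"
  defines "G \<equiv> ginv T g0 u" and "A \<equiv> jac V u"
    and "J \<equiv> ginv T g0 u ** dgmat T (ginv T g0 u *v p)"
  shows "ellF V (Cop T g0) i u w p q
    = ((A ** J - J ** A - G ** hess_inner V u p) *v w + (A ** G - G ** transpose A) *v q) $ i"
proof -
  have Dx: "Dx (Cop T g0) j u w p q = - (J *v w + G *v q) $ j" for j
    unfolding Dx_def J_def G_def
    by (simp add: pd_Cop[OF assms(1,2)] pd_Cop_covector matrix_vector_mult_def sum_negf)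
  have hess: "(\<Sum>m\<in>UNIV. \<Sum>l\<in>UNIV. pd (pd (\<lambda>v. V v $ m) l) j u * w $ l * p $ m)
      = (hess_inner V u p *v w) $ j" for j
    unfolding hess_inner_def matrix_vector_mult_def
    by (subst sum.swap) (simp add: sum_distrib_left mult_ac)
  have Dt: "Dt V (Cop T g0) i u w p q
      = - (J *v (A *v w) + G *v (transpose A *v q + hess_inner V u p *v w)) $ i"
    unfolding Dt_def hess J_def G_def A_def
    by (simp add: pd_Cop[OF assms(1,2)] pd_Cop_covector matrix_vector_mult_def jac_def
        transpose_def sum_negf sum_subtractf algebra_simps sum.distrib)
  have ADx: "(\<Sum>j\<in>UNIV. pd (\<lambda>v. V v $ i) j u * Dx (Cop T g0) j u w p q)
      = - (A *v (J *v w + G *v q)) $ i"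
  proof -
    have "(A *v x) $ i = (\<Sum>j\<in>UNIV. pd (\<lambda>v. V v $ i) j u * x $ j)" for x
      by (simp add: A_def jac_def matrix_vector_mult_def)
    then show ?thesis
      unfolding Dx by (simp add: algebra_simps sum_subtractf sum.distrib sum_negf)
  qed
  have "- (J *v (A *v w) + G *v (transpose A *v q + hess_inner V u p *v w)) + A *v (J *v w + G *v q)
      = (A ** J - J ** A - G ** hess_inner V u p) *v w + (A ** G - G ** transpose A) *v q"
    by (simp add: algebra_simps matrix_vector_mul_assoc del: transpose_matrix_vector)
  then show ?thesis
    unfolding ellF_def Dt ADx by (simp add: vec_eq_iff)
qed

section \<open>Comparing coefficients\<close>

lemma matrix_linear_forms_eq_0_iff:
  fixes L :: "'p \<Rightarrow> real^'n^'m" and D :: "real^'k^'m"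
  shows "(\<forall>w p q. L p *v w + D *v q = 0) \<longleftrightarrow> (\<forall>p. L p = 0) \<and> D = 0"
proof
  assume vanish: "\<forall>w p q. L p *v w + D *v q = 0"
  have "D *v q = 0" for q
    using vanish[rule_format, of undefined 0 q] by simp
  moreover have "L p *v w = 0" for p w
    using vanish[rule_format, of p w 0] by simp
  ultimately show "(\<forall>p. L p = 0) \<and> D = 0"
    by (simp add: matrix_eq)
qed simp

lemma sum_mult_eq_0_iff:
  "(\<forall>x :: real^'n. (\<Sum>j\<in>UNIV. x $ j * c j) = 0) \<longleftrightarrow> (\<forall>j. c j = 0)"
proof (intro iffI allI)
  fix j
  assume "\<forall>x :: real^'n. (\<Sum>j\<in>UNIV. x $ j * c j) = 0"
  from this[rule_format, of "axis j 1"] show "c j = 0"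
    by (simp add: axis_def if_distrib[where f = "\<lambda>a. a * _"] cong: if_cong)
qed simp

lemma invertible_mult_eq_0_iff:
  fixes g X :: "real^'n^'n"
  assumes "invertible g"
  shows "g ** X = 0 \<longleftrightarrow> X = 0" and "X ** g = 0 \<longleftrightarrow> X = 0"
proof -
  show "g ** X = 0 \<longleftrightarrow> X = 0"
    by (metis assms matrix_inv_left matrix_mul_assoc matrix_mul_lid times0_right)
  show "X ** g = 0 \<longleftrightarrow> X = 0"
    by (metis assms matrix_inv_right matrix_mul_assoc matrix_mul_rid times0_left)
qed

lemma skew_commutator_entry:
  fixes g A :: "real^'n^'n"
  assumes "\<And>a b. g $ a $ b = - g $ b $ a"
  shows "(g ** A - transpose A ** g) $ q $ p
    = (\<Sum>j\<in>UNIV. g $ q $ j * A $ j $ p) + (\<Sum>j\<in>UNIV. g $ p $ j * A $ j $ q)"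
  by (simp add: matrix_matrix_mult_def transpose_def assms[of _ p] sum_negf mult.commute)

lemma second_order_entry:
  fixes g A :: "real^'n^'n"
  assumes skewT: "totally_skew3 T" and skewg: "\<And>a b. g $ a $ b = - g $ b $ a"
  shows "(transpose A ** dgmat T x - dgmat T x ** A - hess_inner V u (g *v x)) $ a $ l
     = (\<Sum>j\<in>UNIV. x $ j * (\<Sum>k\<in>UNIV. g $ j $ k * pd (pd (\<lambda>v. V v $ k) l) a u
                                 + T a j k * A $ k $ l + T j k l * A $ k $ a))"
proof -
  have T23: "T i j k = - T i k j" and Tcyc: "T i j k = T k i j" for i j k
    using skewT unfolding totally_skew3_def by (blast, metis)
  have dg_cyc: "dgmat T x $ k $ l = (\<Sum>j\<in>UNIV. T j k l * x $ j)" for k l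
    by (simp add: dgmat_def Tcyc[of k l])
  have dg_skew: "dgmat T x $ a $ k = - (\<Sum>j\<in>UNIV. T a j k * x $ j)" for k
    by (simp add: dgmat_def T23[of a k] sum_negf)
  have gx: "(g *v x) $ m = - (\<Sum>j\<in>UNIV. g $ j $ m * x $ j)" for m
    by (simp add: matrix_vector_mult_def skewg[of m] sum_negf)
  have "(transpose A ** dgmat T x) $ a $ l = (\<Sum>k\<in>UNIV. \<Sum>j\<in>UNIV. x $ j * (T j k l * A $ k $ a))"
    by (simp add: matrix_matrix_mult_def transpose_def dg_cyc sum_distrib_left mult_ac)
  also have "\<dots> = (\<Sum>j\<in>UNIV. x $ j * (\<Sum>k\<in>UNIV. T j k l * A $ k $ a))"
    by (subst sum.swap) (simp add: sum_distrib_left)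
  finally have 1: "(transpose A ** dgmat T x) $ a $ l = \<dots>" .
  have "(dgmat T x ** A) $ a $ l = - (\<Sum>k\<in>UNIV. \<Sum>j\<in>UNIV. x $ j * (T a j k * A $ k $ l))"
    by (simp add: matrix_matrix_mult_def dg_skew sum_distrib_left sum_negf mult_ac)
  also have "\<dots> = - (\<Sum>j\<in>UNIV. x $ j * (\<Sum>k\<in>UNIV. T a j k * A $ k $ l))"
    by (subst sum.swap) (simp add: sum_distrib_left)
  finally have 2: "(dgmat T x ** A) $ a $ l = \<dots>" .
  have "hess_inner V u (g *v x) $ a $ l
      = - (\<Sum>m\<in>UNIV. \<Sum>j\<in>UNIV. x $ j * (g $ j $ m * pd (pd (\<lambda>v. V v $ m) l) a u))"
    by (simp add: hess_inner_def gx sum_distrib_left sum_negf mult_ac)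
  also have "\<dots> = - (\<Sum>j\<in>UNIV. x $ j * (\<Sum>m\<in>UNIV. g $ j $ m * pd (pd (\<lambda>v. V v $ m) l) a u))"
    by (subst sum.swap) (simp add: sum_distrib_left)
  finally have 3: "hess_inner V u (g *v x) $ a $ l = \<dots>" .
  show ?thesis
    by (simp add: 1 2 3 sum.distrib distrib_left)
qed

lemma conjugate_coefficient:
  fixes g G A M H :: "real^'n^'n"
  assumes "g ** G = mat 1" "g ** A ** G = transpose A"
  shows "g ** (A ** (G ** M) - G ** M ** A - G ** H) = transpose A ** M - M ** A - H"
  by (simp add: matrix_diff_ldistrib matrix_mul_assoc assms)

lemma first_order_coefficient_eq_0_iff:
  fixes g G A :: "real^'n^'n"
  assumes gG: "g ** G = mat 1" and Gg: "G ** g = mat 1"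
    and g_skew: "\<And>a b. g $ a $ b = - g $ b $ a"
  shows "A ** G - G ** transpose A = 0
    \<longleftrightarrow> (\<forall>p q. (\<Sum>j\<in>UNIV. g $ q $ j * A $ j $ p) + (\<Sum>j\<in>UNIV. g $ p $ j * A $ j $ q) = 0)"
proof -
  have "invertible g"
    using gG Gg unfolding invertible_def by blast
  then have "A ** G - G ** transpose A = 0 \<longleftrightarrow> g ** (A ** G - G ** transpose A) ** g = 0"
    by (simp add: invertible_mult_eq_0_iff)
  also have "g ** (A ** G - G ** transpose A) ** g = g ** A - transpose A ** g"
    by (simp add: matrix_diff_ldistrib matrix_diff_rdistrib matrix_mul_assoc gG)
      (metis Gg matrix_mul_assoc matrix_mul_rid)
  also have "\<dots> = 0 \<longleftrightarrow> (\<forall>q p. (g ** A - transpose A ** g) $ q $ p = 0)"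
    by (simp only: vec_eq_iff zero_index)
  finally show ?thesis
    unfolding skew_commutator_entry[OF g_skew] by blast
qed

lemma second_order_coefficient_eq_0_iff:
  fixes g G A :: "real^'n^'n"
  assumes gG: "g ** G = mat 1" and Gg: "G ** g = mat 1"
    and g_skew: "\<And>a b. g $ a $ b = - g $ b $ a" and skewT: "totally_skew3 T"
    and AG: "A ** G = G ** transpose A"
  shows "(\<forall>p. A ** (G ** dgmat T (G *v p)) - G ** dgmat T (G *v p) ** A - G ** hess_inner V u p = 0)
    \<longleftrightarrow> (\<forall>a j l. (\<Sum>k\<in>UNIV. g $ j $ k * pd (pd (\<lambda>v. V v $ k) l) a u
                          + T a j k * A $ k $ l + T j k l * A $ k $ a) = 0)"
    (is "(\<forall>p. ?L p = 0) \<longleftrightarrow> _")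
proof -
  have "invertible g"
    using gG Gg unfolding invertible_def by blast
  have "g ** A ** G = (g ** G) ** transpose A"
    by (simp add: AG flip: matrix_mul_assoc)
  then have gAG: "g ** A ** G = transpose A"
    by (simp add: gG)
  have "(\<forall>p. ?L p = 0) \<longleftrightarrow> (\<forall>x. ?L (g *v x) = 0)"
  proof (intro iffI allI)
    fix p
    assume "\<forall>x. ?L (g *v x) = 0"
    moreover have "g *v (G *v p) = p"
      by (simp add: matrix_vector_mul_assoc gG)
    ultimately show "?L p = 0"
      by metis
  qed simp
  also have "\<dots> \<longleftrightarrow> (\<forall>x. g ** ?L (g *v x) = 0)"
    using \<open>invertible g\<close> by (simp add: invertible_mult_eq_0_iff)
  also have "\<dots> \<longleftrightarrow> (\<forall>x. transpose A ** dgmat T x - dgmat T x ** A - hess_inner V u (g *v x) = 0)"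
    by (simp add: matrix_vector_mul_assoc Gg conjugate_coefficient[OF gG gAG])
  also have "\<dots> \<longleftrightarrow> (\<forall>a l x.
      (transpose A ** dgmat T x - dgmat T x ** A - hess_inner V u (g *v x)) $ a $ l = 0)"
    by (simp only: vec_eq_iff zero_index) blast
  finally show ?thesis
    unfolding second_order_entry[OF skewT g_skew] sum_mult_eq_0_iff by blast
qed

lemma ellF_Cop_vanishes_iff:
  fixes V :: "real^'n \<Rightarrow> real^'n"
    and T :: "'n \<Rightarrow> 'n \<Rightarrow> 'n \<Rightarrow> real"
    and g0 :: "'n \<Rightarrow> 'n \<Rightarrow> real"
  assumes smooth: "\<And>i. smooth_on U (\<lambda>u. V u $ i)"
    and skewT: "totally_skew3 T" and skewg0: "skew2 g0"
    and u: "u \<in> U" and inv: "invertible (gmat T g0 u)"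
  shows "(\<forall>w p q i. ellF V (Cop T g0) i u w p q = 0)
     \<longleftrightarrow> (\<forall>p q. (\<Sum>j\<in>UNIV. gmat T g0 u $ q $ j * pd (\<lambda>v. V v $ j) p u)
                 + (\<Sum>j\<in>UNIV. gmat T g0 u $ p $ j * pd (\<lambda>v. V v $ j) q u) = 0)
         \<and> (\<forall>p q l. (\<Sum>k\<in>UNIV. gmat T g0 u $ q $ k * pd (pd (\<lambda>v. V v $ k) p) l u
                 + pd (\<lambda>v. gmat T g0 v $ p $ q) k u * pd (\<lambda>v. V v $ k) l u
                 + pd (\<lambda>v. gmat T g0 v $ q $ k) l u * pd (\<lambda>v. V v $ k) p u) = 0)"
    (is "_ \<longleftrightarrow> ?first_order \<and> ?second_order")
proof -
  define g G A where "g = gmat T g0 u" and "G = ginv T g0 u" and "A = jac V u"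
  define L where
    "L p = A ** (G ** dgmat T (G *v p)) - G ** dgmat T (G *v p) ** A - G ** hess_inner V u p" for p
  define D where "D = A ** G - G ** transpose A"
  have gG: "g ** G = mat 1" and Gg: "G ** g = mat 1"
    using inv by (simp_all add: g_def G_def ginv_def matrix_inv_right matrix_inv_left)
  have g_skew: "g $ a $ b = - g $ b $ a" for a b
    unfolding g_def by (rule gmat_skew[OF skewT skewg0])
  have "(\<forall>w p q i. ellF V (Cop T g0) i u w p q = 0)
      \<longleftrightarrow> (\<forall>w p q. L p *v w + D *v q = 0)"
    by (simp add: ellF_Cop[OF inv skewT] L_def D_def G_def A_def vec_eq_iff[of _ 0])
  also have "\<dots> \<longleftrightarrow> (\<forall>p. L p = 0) \<and> D = 0"
    by (rule matrix_linear_forms_eq_0_iff)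
  finally have ellF_iff:
    "(\<forall>w p q i. ellF V (Cop T g0) i u w p q = 0) \<longleftrightarrow> (\<forall>p. L p = 0) \<and> D = 0" .
  have D_iff: "D = 0 \<longleftrightarrow> ?first_order"
    unfolding D_def first_order_coefficient_eq_0_iff[OF gG Gg g_skew]
    by (simp add: g_def A_def jac_def)
  have L_iff: "(\<forall>p. L p = 0) \<longleftrightarrow> ?second_order" if "D = 0"
  proof -
    have AG: "A ** G = G ** transpose A"
      using that by (simp add: D_def)
    have "(\<forall>p. L p = 0) \<longleftrightarrow> (\<forall>a j l. (\<Sum>k\<in>UNIV. g $ j $ k * pd (pd (\<lambda>v. V v $ k) l) a u
                          + T a j k * A $ k $ l + T j k l * A $ k $ a) = 0)"
      unfolding L_def by (rule second_order_coefficient_eq_0_iff[OF gG Gg g_skew skewT AG])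
    also have "\<dots> \<longleftrightarrow> ?second_order"
      by (auto simp: pd_gmat g_def A_def jac_def smooth_on_pd_commute[OF smooth u])
    finally show ?thesis .
  qed
  show ?thesis
    using ellF_iff D_iff L_iff by blast
qed

theorem mainTheorem5:
  fixes V :: "real^'n \<Rightarrow> real^'n"
    and T :: "'n \<Rightarrow> 'n \<Rightarrow> 'n \<Rightarrow> real"
    and g0 :: "'n \<Rightarrow> 'n \<Rightarrow> real"
    and U :: "(real^'n) set"
  assumes smooth: "\<And>i. smooth_on U (\<lambda>u. V u $ i)"
    and skewT: "totally_skew3 T"
    and skewg0: "skew2 g0"
    and nondeg: "\<And>u. u \<in> U \<Longrightarrow> invertible (gmat T g0 u)"
  shows "(\<forall>u\<in>U. \<forall>w p q i. ellF V (Cop T g0) i u w p q = 0)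
     \<longleftrightarrow> (\<forall>u\<in>U.
           (\<forall>p q. (\<Sum>j\<in>UNIV. gmat T g0 u $ q $ j * pd (\<lambda>v. V v $ j) p u)
                 + (\<Sum>j\<in>UNIV. gmat T g0 u $ p $ j * pd (\<lambda>v. V v $ j) q u) = 0)
         \<and> (\<forall>p q l. (\<Sum>k\<in>UNIV. gmat T g0 u $ q $ k * pd (pd (\<lambda>v. V v $ k) p) l u
                 + pd (\<lambda>v. gmat T g0 v $ p $ q) k u * pd (\<lambda>v. V v $ k) l u
                 + pd (\<lambda>v. gmat T g0 v $ q $ k) l u * pd (\<lambda>v. V v $ k) p u) = 0))"
  by (simp add: ellF_Cop_vanishes_iff[OF smooth skewT skewg0 _ nondeg])

end
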